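(* Let $\mathcal{C}$ be a peircean bicategory, write $a;^\bullet b:=\neg(\neg a;\neg b)$ and $\mathrm{id}^\bullet_X:=\neg\,\mathrm{id}_X$. For every arrow $c:X\to Y$: (1) $c;(\neg c)^\dagger\le\mathrm{id}^\bullet_X$; (2) $\mathrm{id}_Y\le(\neg c)^\dagger;^\bullet c$; (3) $(\neg c)^\dagger;c\le\mathrm{id}^\bullet_Y$; (4) $\mathrm{id}_X\le c;^\bullet(\neg c)^\dagger$.
   Context: Composition $;$ in diagrammatic order. A cartesian bicategory is a poset-enriched symmetric monoidal category with, for each $X$, commutative comonoid $(\mathrm{copy}_X,\mathrm{disc}_X)$ and monoid $(\mathrm{cocopy}_X,\mathrm{codisc}_X)$ forming special Frobenius bimonoids, comonoid left adjoint to monoid, every arrow $c$ satisfying $c;\mathrm{copy}\le\mathrm{copy};(c\otimes c)$ and $c;\mathrm{disc}\le\mathrm{disc}$, with standard coherence. A map is an arrow $f$ with $f;\mathrm{copy}=\mathrm{copy};(f\otimes f)$ and $f;\mathrm{disc}=\mathrm{disc}$. A peircean bicategory is a cartesian bicategory whose homsets carry Boolean algebras (with the given order) such that $f;\neg c=\neg(f;c)$ for every map $f:X\to Y$ and arrow $c:Y\to Z$. The converse of $c:X\to Y$ is $c^\dagger=(\mathrm{id}_Y\otimes(\mathrm{codisc}_X;\mathrm{copy}_X));(\mathrm{id}_Y\otimes c\otimes\mathrm{id}_X);((\mathrm{cocopy}_Y;\mathrm{disc}_Y)\otimes\mathrm{id}_X):Y\to X$. *)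

theory Defs
  imports Main
begin

text \<open>Composition Comp is in diagrammatic order: Comp f g = f ; g.\<close>

record ('o, 'a) pbicat =
  Dom    :: "'a \<Rightarrow> 'o"
  Cod    :: "'a \<Rightarrow> 'o"
  Arr    :: "'a \<Rightarrow> bool"
  Id     :: "'o \<Rightarrow> 'a"
  Comp   :: "'a \<Rightarrow> 'a \<Rightarrow> 'a"
  TensO  :: "'o \<Rightarrow> 'o \<Rightarrow> 'o"
  TensA  :: "'a \<Rightarrow> 'a \<Rightarrow> 'a"
  Unit   :: "'o"
  Sym    :: "'o \<Rightarrow> 'o \<Rightarrow> 'a"
  Le     :: "'a \<Rightarrow> 'a \<Rightarrow> bool"
  Copy   :: "'o \<Rightarrow> 'a"
  Disc   :: "'o \<Rightarrow> 'a"
  Cocopy :: "'o \<Rightarrow> 'a"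
  Codisc :: "'o \<Rightarrow> 'a"
  Neg    :: "'a \<Rightarrow> 'a"
  Join   :: "'a \<Rightarrow> 'a \<Rightarrow> 'a"
  Meet   :: "'a \<Rightarrow> 'a \<Rightarrow> 'a"
  Top    :: "'o \<Rightarrow> 'o \<Rightarrow> 'a"
  Bot    :: "'o \<Rightarrow> 'o \<Rightarrow> 'a"

definition hom :: "('o, 'a, 'm) pbicat_scheme \<Rightarrow> 'o \<Rightarrow> 'o \<Rightarrow> 'a set" where
  "hom C X Y = {f. Arr C f \<and> Dom C f = X \<and> Cod C f = Y}"

locale category =
  fixes C :: "('o, 'a, 'm) pbicat_scheme"
  assumes id_hom: "Id C X \<in> hom C X X"
    and comp_hom: "\<lbrakk>f \<in> hom C X Y; g \<in> hom C Y Z\<rbrakk> \<Longrightarrow> Comp C f g \<in> hom C X Z"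
    and comp_assoc: "\<lbrakk>f \<in> hom C X Y; g \<in> hom C Y Z; h \<in> hom C Z W\<rbrakk>
        \<Longrightarrow> Comp C (Comp C f g) h = Comp C f (Comp C g h)"
    and id_left: "f \<in> hom C X Y \<Longrightarrow> Comp C (Id C X) f = f"
    and id_right: "f \<in> hom C X Y \<Longrightarrow> Comp C f (Id C Y) = f"

locale strict_symmetric_monoidal = category C
  for C :: "('o, 'a, 'm) pbicat_scheme" +
  assumes tens_hom: "\<lbrakk>f \<in> hom C X Y; g \<in> hom C X' Y'\<rbrakk>
        \<Longrightarrow> TensA C f g \<in> hom C (TensO C X X') (TensO C Y Y')"
    and tens_id: "TensA C (Id C X) (Id C Y) = Id C (TensO C X Y)"
    and interchange: "\<lbrakk>f \<in> hom C X Y; g \<in> hom C Y Z; f' \<in> hom C X' Y'; g' \<in> hom C Y' Z'\<rbrakk>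
        \<Longrightarrow> TensA C (Comp C f g) (Comp C f' g') = Comp C (TensA C f f') (TensA C g g')"
    and tensO_assoc: "TensO C (TensO C X Y) Z = TensO C X (TensO C Y Z)"
    and tensO_unit_left: "TensO C (Unit C) X = X"
    and tensO_unit_right: "TensO C X (Unit C) = X"
    and tensA_assoc: "\<lbrakk>Arr C f; Arr C g; Arr C h\<rbrakk>
        \<Longrightarrow> TensA C (TensA C f g) h = TensA C f (TensA C g h)"
    and tensA_unit_left: "Arr C f \<Longrightarrow> TensA C (Id C (Unit C)) f = f"
    and tensA_unit_right: "Arr C f \<Longrightarrow> TensA C f (Id C (Unit C)) = f"
    and sym_hom: "Sym C X Y \<in> hom C (TensO C X Y) (TensO C Y X)"
    and sym_natural: "\<lbrakk>f \<in> hom C X X'; g \<in> hom C Y Y'\<rbrakk>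
        \<Longrightarrow> Comp C (TensA C f g) (Sym C X' Y') = Comp C (Sym C X Y) (TensA C g f)"
    and sym_inverse: "Comp C (Sym C X Y) (Sym C Y X) = Id C (TensO C X Y)"
    and sym_hexagon: "Sym C X (TensO C Y Z)
        = Comp C (TensA C (Sym C X Y) (Id C Z)) (TensA C (Id C Y) (Sym C X Z))"

locale poset_enriched_ssm = strict_symmetric_monoidal C
  for C :: "('o, 'a, 'm) pbicat_scheme" +
  assumes le_parallel: "Le C f g \<Longrightarrow> Arr C f \<and> Arr C g \<and> Dom C f = Dom C g \<and> Cod C f = Cod C g"
    and le_refl: "Arr C f \<Longrightarrow> Le C f f"
    and le_trans: "\<lbrakk>Le C f g; Le C g h\<rbrakk> \<Longrightarrow> Le C f h"
    and le_antisym: "\<lbrakk>Le C f g; Le C g f\<rbrakk> \<Longrightarrow> f = g"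
    and comp_mono: "\<lbrakk>Le C f f'; Le C g g'; Cod C f = Dom C g\<rbrakk>
        \<Longrightarrow> Le C (Comp C f g) (Comp C f' g')"
    and tens_mono: "\<lbrakk>Le C f f'; Le C g g'\<rbrakk> \<Longrightarrow> Le C (TensA C f g) (TensA C f' g')"

locale cartesian_bicategory = poset_enriched_ssm C
  for C :: "('o, 'a, 'm) pbicat_scheme" +
  assumes copy_hom: "Copy C X \<in> hom C X (TensO C X X)"
    and disc_hom: "Disc C X \<in> hom C X (Unit C)"
    and cocopy_hom: "Cocopy C X \<in> hom C (TensO C X X) X"
    and codisc_hom: "Codisc C X \<in> hom C (Unit C) X"
    and copy_assoc: "Comp C (Copy C X) (TensA C (Copy C X) (Id C X))
        = Comp C (Copy C X) (TensA C (Id C X) (Copy C X))"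
    and copy_unit: "Comp C (Copy C X) (TensA C (Disc C X) (Id C X)) = Id C X"
    and copy_comm: "Comp C (Copy C X) (Sym C X X) = Copy C X"
    and cocopy_assoc: "Comp C (TensA C (Cocopy C X) (Id C X)) (Cocopy C X)
        = Comp C (TensA C (Id C X) (Cocopy C X)) (Cocopy C X)"
    and cocopy_unit: "Comp C (TensA C (Codisc C X) (Id C X)) (Cocopy C X) = Id C X"
    and cocopy_comm: "Comp C (Sym C X X) (Cocopy C X) = Cocopy C X"
    and frobenius1: "Comp C (TensA C (Copy C X) (Id C X)) (TensA C (Id C X) (Cocopy C X))
        = Comp C (Cocopy C X) (Copy C X)"
    and frobenius2: "Comp C (TensA C (Id C X) (Copy C X)) (TensA C (Cocopy C X) (Id C X))
        = Comp C (Cocopy C X) (Copy C X)"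
    and special: "Comp C (Copy C X) (Cocopy C X) = Id C X"
    and copy_adj_unit: "Le C (Id C X) (Comp C (Copy C X) (Cocopy C X))"
    and copy_adj_counit: "Le C (Comp C (Cocopy C X) (Copy C X)) (Id C (TensO C X X))"
    and disc_adj_unit: "Le C (Id C X) (Comp C (Disc C X) (Codisc C X))"
    and disc_adj_counit: "Le C (Comp C (Codisc C X) (Disc C X)) (Id C (Unit C))"
    and lax_copy: "c \<in> hom C X Y \<Longrightarrow>
        Le C (Comp C c (Copy C Y)) (Comp C (Copy C X) (TensA C c c))"
    and lax_disc: "c \<in> hom C X Y \<Longrightarrow> Le C (Comp C c (Disc C Y)) (Disc C X)"
    and copy_tens: "Copy C (TensO C X Y) = Comp C (TensA C (Copy C X) (Copy C Y))
        (TensA C (TensA C (Id C X) (Sym C X Y)) (Id C Y))"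
    and disc_tens: "Disc C (TensO C X Y) = TensA C (Disc C X) (Disc C Y)"
    and copy_unit_obj: "Copy C (Unit C) = Id C (Unit C)"
    and disc_unit_obj: "Disc C (Unit C) = Id C (Unit C)"
    and cocopy_tens: "Cocopy C (TensO C X Y) =
        Comp C (TensA C (TensA C (Id C X) (Sym C Y X)) (Id C Y)) (TensA C (Cocopy C X) (Cocopy C Y))"
    and codisc_tens: "Codisc C (TensO C X Y) = TensA C (Codisc C X) (Codisc C Y)"
    and cocopy_unit_obj: "Cocopy C (Unit C) = Id C (Unit C)"
    and codisc_unit_obj: "Codisc C (Unit C) = Id C (Unit C)"

definition is_map :: "('o, 'a, 'm) pbicat_scheme \<Rightarrow> 'a \<Rightarrow> bool" where
  "is_map C f \<longleftrightarrow> Arr C f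
     \<and> Comp C f (Copy C (Cod C f)) = Comp C (Copy C (Dom C f)) (TensA C f f)
     \<and> Comp C f (Disc C (Cod C f)) = Disc C (Dom C f)"

locale peircean_bicategory = cartesian_bicategory C
  for C :: "('o, 'a, 'm) pbicat_scheme" +
  assumes neg_hom: "f \<in> hom C X Y \<Longrightarrow> Neg C f \<in> hom C X Y"
    and join_hom: "\<lbrakk>f \<in> hom C X Y; g \<in> hom C X Y\<rbrakk> \<Longrightarrow> Join C f g \<in> hom C X Y"
    and meet_hom: "\<lbrakk>f \<in> hom C X Y; g \<in> hom C X Y\<rbrakk> \<Longrightarrow> Meet C f g \<in> hom C X Y"
    and top_hom: "Top C X Y \<in> hom C X Y"
    and bot_hom: "Bot C X Y \<in> hom C X Y"
    and join_lub: "\<lbrakk>f \<in> hom C X Y; g \<in> hom C X Y; h \<in> hom C X Y\<rbrakk>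
        \<Longrightarrow> Le C (Join C f g) h \<longleftrightarrow> Le C f h \<and> Le C g h"
    and meet_glb: "\<lbrakk>f \<in> hom C X Y; g \<in> hom C X Y; h \<in> hom C X Y\<rbrakk>
        \<Longrightarrow> Le C h (Meet C f g) \<longleftrightarrow> Le C h f \<and> Le C h g"
    and top_greatest: "f \<in> hom C X Y \<Longrightarrow> Le C f (Top C X Y)"
    and bot_least: "f \<in> hom C X Y \<Longrightarrow> Le C (Bot C X Y) f"
    and distrib: "\<lbrakk>f \<in> hom C X Y; g \<in> hom C X Y; h \<in> hom C X Y\<rbrakk>
        \<Longrightarrow> Meet C f (Join C g h) = Join C (Meet C f g) (Meet C f h)"
    and neg_meet: "f \<in> hom C X Y \<Longrightarrow> Meet C f (Neg C f) = Bot C X Y"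
    and neg_join: "f \<in> hom C X Y \<Longrightarrow> Join C f (Neg C f) = Top C X Y"
    and map_neg: "\<lbrakk>is_map C f; f \<in> hom C X Y; c \<in> hom C Y Z\<rbrakk>
        \<Longrightarrow> Comp C f (Neg C c) = Neg C (Comp C f c)"

definition conv :: "('o, 'a, 'm) pbicat_scheme \<Rightarrow> 'a \<Rightarrow> 'a" where
  "conv C c = (let X = Dom C c; Y = Cod C c in
     Comp C (Comp C (TensA C (Id C Y) (Comp C (Codisc C X) (Copy C X)))
                    (TensA C (TensA C (Id C Y) c) (Id C X)))
            (TensA C (Comp C (Cocopy C Y) (Disc C Y)) (Id C X)))"

definition bcomp :: "('o, 'a, 'm) pbicat_scheme \<Rightarrow> 'a \<Rightarrow> 'a \<Rightarrow> 'a" where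
  "bcomp C a b = Neg C (Comp C (Neg C a) (Neg C b))"

definition bid :: "('o, 'a, 'm) pbicat_scheme \<Rightarrow> 'o \<Rightarrow> 'a" where
  "bid C X = Neg C (Id C X)"

end

theory Submission
  imports Defs
begin

text \<open>Write d = \<not>c. Bending along the Frobenius cup turns c ; d\<dagger> into the arrow
  (c \<otimes> d) ; cup : X \<otimes> X \<rightarrow> I, and precomposing with copy turns that into
  (c \<inter> d) ; disc, where c \<inter> d = copy ; (c \<otimes> d) ; cocopy coincides with the Boolean
  meet c \<and> \<not>c = \<bottom>. Bending is an order isomorphism between homsets, hence commutes with
  negation, and copy is a map, hence commutes with negation as well; so
  copy ; bend (\<not>(c ; d\<dagger>)) = \<not>\<bottom> = disc, which says \<not>(c ; d\<dagger>) \<inter> id = id, i.e.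
  c ; d\<dagger> \<le> \<not>id. Claim (3) is claim (1) for (\<not>c)\<dagger>, as converse is involutive and
  commutes with negation; (2) and (4) are (3) and (1) for \<not>c, contraposed.\<close>

context category
begin

lemma arr_Id [simp]: "Arr C (Id C X)"
  and dom_Id [simp]: "Dom C (Id C X) = X"
  and cod_Id [simp]: "Cod C (Id C X) = X"
  using id_hom[of X] by (auto simp: hom_def)

lemma arr_Comp [simp]: "\<lbrakk>Arr C f; Arr C g; Cod C f = Dom C g\<rbrakk> \<Longrightarrow> Arr C (Comp C f g)"
  and dom_Comp [simp]: "\<lbrakk>Arr C f; Arr C g; Cod C f = Dom C g\<rbrakk> \<Longrightarrow> Dom C (Comp C f g) = Dom C f"
  and cod_Comp [simp]: "\<lbrakk>Arr C f; Arr C g; Cod C f = Dom C g\<rbrakk> \<Longrightarrow> Cod C (Comp C f g) = Cod C g"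
  using comp_hom[of f "Dom C f" "Cod C f" g "Cod C g"] by (auto simp: hom_def)

lemma Id_comp [simp]: "\<lbrakk>Arr C f; Dom C f = X\<rbrakk> \<Longrightarrow> Comp C (Id C X) f = f"
  using id_left[of f X "Cod C f"] by (auto simp: hom_def)

lemma comp_Id [simp]: "\<lbrakk>Arr C f; Cod C f = X\<rbrakk> \<Longrightarrow> Comp C f (Id C X) = f"
  using id_right[of f "Dom C f" X] by (auto simp: hom_def)

lemma comp_assoc':
  "\<lbrakk>Arr C f; Arr C g; Arr C h; Cod C f = Dom C g; Cod C g = Dom C h\<rbrakk>
   \<Longrightarrow> Comp C (Comp C f g) h = Comp C f (Comp C g h)"
  using comp_assoc[of f "Dom C f" "Cod C f" g "Cod C g" h "Cod C h"] by (auto simp: hom_def)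

end

context strict_symmetric_monoidal
begin

declare tensO_assoc [simp] tensO_unit_left [simp] tensO_unit_right [simp]
  tensA_unit_left [simp] tensA_unit_right [simp] tens_id [simp]

lemma arr_TensA [simp]: "\<lbrakk>Arr C f; Arr C g\<rbrakk> \<Longrightarrow> Arr C (TensA C f g)"
  and dom_TensA [simp]: "\<lbrakk>Arr C f; Arr C g\<rbrakk> \<Longrightarrow> Dom C (TensA C f g) = TensO C (Dom C f) (Dom C g)"
  and cod_TensA [simp]: "\<lbrakk>Arr C f; Arr C g\<rbrakk> \<Longrightarrow> Cod C (TensA C f g) = TensO C (Cod C f) (Cod C g)"
  using tens_hom[of f "Dom C f" "Cod C f" g "Dom C g" "Cod C g"] by (auto simp: hom_def)

lemma arr_Sym [simp]: "Arr C (Sym C X Y)"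
  and dom_Sym [simp]: "Dom C (Sym C X Y) = TensO C X Y"
  and cod_Sym [simp]: "Cod C (Sym C X Y) = TensO C Y X"
  using sym_hom[of X Y] by (auto simp: hom_def)

lemma interchange':
  "\<lbrakk>Arr C f; Arr C g; Arr C f'; Arr C g'; Cod C f = Dom C g; Cod C f' = Dom C g'\<rbrakk>
   \<Longrightarrow> TensA C (Comp C f g) (Comp C f' g') = Comp C (TensA C f f') (TensA C g g')"
  using interchange[of f "Dom C f" "Cod C f" g "Cod C g" f' "Dom C f'" "Cod C f'" g' "Cod C g'"]
  by (auto simp: hom_def)

lemma sym_natural':
  "\<lbrakk>Arr C f; Arr C g\<rbrakk> \<Longrightarrow> Comp C (TensA C f g) (Sym C (Cod C f) (Cod C g))
     = Comp C (Sym C (Dom C f) (Dom C g)) (TensA C g f)"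
  using sym_natural[of f "Dom C f" "Cod C f" g "Dom C g" "Cod C g"] by (auto simp: hom_def)

lemma Sym_Unit_right [simp]: "Sym C X (Unit C) = Id C X"
proof -
  have idem: "Sym C X (Unit C) = Comp C (Sym C X (Unit C)) (Sym C X (Unit C))"
    using sym_hexagon[of X "Unit C" "Unit C"] by simp
  have inv: "Comp C (Sym C X (Unit C)) (Sym C (Unit C) X) = Id C X"
    using sym_inverse[of X "Unit C"] by simp
  have "Sym C X (Unit C) = Comp C (Sym C X (Unit C)) (Comp C (Sym C X (Unit C)) (Sym C (Unit C) X))"
    using inv by simp
  also have "\<dots> = Comp C (Comp C (Sym C X (Unit C)) (Sym C X (Unit C))) (Sym C (Unit C) X)"
    by (simp add: comp_assoc')
  also have "\<dots> = Id C X"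
    using idem inv by simp
  finally show ?thesis .
qed

end

context poset_enriched_ssm
begin

declare le_trans [trans]

lemma comp_left_mono: "\<lbrakk>Le C g g'; Arr C f; Cod C f = Dom C g\<rbrakk> \<Longrightarrow> Le C (Comp C f g) (Comp C f g')"
  using comp_mono[of f f g g'] le_refl le_parallel by blast

lemma comp_right_mono: "\<lbrakk>Le C f f'; Arr C g; Cod C f = Dom C g\<rbrakk> \<Longrightarrow> Le C (Comp C f g) (Comp C f' g)"
  using comp_mono[of f f' g g] le_refl le_parallel by blast

end

context cartesian_bicategory
begin

lemma arr_Copy [simp]: "Arr C (Copy C X)"
  and dom_Copy [simp]: "Dom C (Copy C X) = X"
  and cod_Copy [simp]: "Cod C (Copy C X) = TensO C X X"
  using copy_hom[of X] by (auto simp: hom_def)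

lemma arr_Cocopy [simp]: "Arr C (Cocopy C X)"
  and dom_Cocopy [simp]: "Dom C (Cocopy C X) = TensO C X X"
  and cod_Cocopy [simp]: "Cod C (Cocopy C X) = X"
  using cocopy_hom[of X] by (auto simp: hom_def)

lemma arr_Disc [simp]: "Arr C (Disc C X)"
  and dom_Disc [simp]: "Dom C (Disc C X) = X"
  and cod_Disc [simp]: "Cod C (Disc C X) = Unit C"
  using disc_hom[of X] by (auto simp: hom_def)

lemma arr_Codisc [simp]: "Arr C (Codisc C X)"
  and dom_Codisc [simp]: "Dom C (Codisc C X) = Unit C"
  and cod_Codisc [simp]: "Cod C (Codisc C X) = X"
  using codisc_hom[of X] by (auto simp: hom_def)

lemma copy_unit_right: "Comp C (Copy C X) (TensA C (Id C X) (Disc C X)) = Id C X"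
proof -
  have "TensA C (Id C X) (Disc C X) = Comp C (Sym C X X) (TensA C (Disc C X) (Id C X))"
    using sym_natural'[of "Id C X" "Disc C X"] by simp
  then have "Comp C (Copy C X) (TensA C (Id C X) (Disc C X))
      = Comp C (Comp C (Copy C X) (Sym C X X)) (TensA C (Disc C X) (Id C X))"
    by (simp add: comp_assoc')
  then show ?thesis by (simp add: copy_comm copy_unit)
qed

lemma cocopy_unit_right: "Comp C (TensA C (Id C X) (Codisc C X)) (Cocopy C X) = Id C X"
proof -
  have "Comp C (TensA C (Id C X) (Codisc C X)) (Cocopy C X)
      = Comp C (TensA C (Id C X) (Codisc C X)) (Comp C (Sym C X X) (Cocopy C X))"
    by (simp add: cocopy_comm)
  also have "\<dots> = Comp C (Comp C (TensA C (Id C X) (Codisc C X)) (Sym C X X)) (Cocopy C X)"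
    by (simp add: comp_assoc')
  also have "Comp C (TensA C (Id C X) (Codisc C X)) (Sym C X X) = TensA C (Codisc C X) (Id C X)"
    using sym_natural'[of "Id C X" "Codisc C X"] by simp
  finally show ?thesis
    by (simp add: cocopy_unit)
qed

abbreviation cap :: "'o \<Rightarrow> 'a"
  where "cap X \<equiv> Comp C (Codisc C X) (Copy C X)"

abbreviation cup :: "'o \<Rightarrow> 'a"
  where "cup X \<equiv> Comp C (Cocopy C X) (Disc C X)"

lemma snake_left: "Comp C (TensA C (Id C X) (cap X)) (TensA C (cup X) (Id C X)) = Id C X"
proof -
  have cap: "TensA C (Id C X) (cap X)
      = Comp C (TensA C (Id C X) (Codisc C X)) (TensA C (Id C X) (Copy C X))"
    using interchange'[of "Id C X" "Id C X" "Codisc C X" "Copy C X"] by simp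
  have cup: "TensA C (cup X) (Id C X)
      = Comp C (TensA C (Cocopy C X) (Id C X)) (TensA C (Disc C X) (Id C X))"
    using interchange'[of "Cocopy C X" "Disc C X" "Id C X" "Id C X"] by simp
  have frob: "Comp C (TensA C (Id C X) (Copy C X))
      (Comp C (TensA C (Cocopy C X) (Id C X)) (TensA C (Disc C X) (Id C X)))
      = Comp C (Comp C (Cocopy C X) (Copy C X)) (TensA C (Disc C X) (Id C X))"
    using frobenius2[of X] by (simp flip: comp_assoc')
  show ?thesis
    unfolding cap cup using frob by (simp add: comp_assoc' copy_unit cocopy_unit_right)
qed

lemma snake_right: "Comp C (TensA C (cap X) (Id C X)) (TensA C (Id C X) (cup X)) = Id C X"
proof -
  have cap: "TensA C (cap X) (Id C X)
      = Comp C (TensA C (Codisc C X) (Id C X)) (TensA C (Copy C X) (Id C X))"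
    using interchange'[of "Codisc C X" "Copy C X" "Id C X" "Id C X"] by simp
  have cup: "TensA C (Id C X) (cup X)
      = Comp C (TensA C (Id C X) (Cocopy C X)) (TensA C (Id C X) (Disc C X))"
    using interchange'[of "Id C X" "Id C X" "Cocopy C X" "Disc C X"] by simp
  have frob: "Comp C (TensA C (Copy C X) (Id C X))
      (Comp C (TensA C (Id C X) (Cocopy C X)) (TensA C (Id C X) (Disc C X)))
      = Comp C (Comp C (Cocopy C X) (Copy C X)) (TensA C (Id C X) (Disc C X))"
    using frobenius1[of X] by (simp flip: comp_assoc')
  show ?thesis
    unfolding cap cup using frob by (simp add: comp_assoc' copy_unit_right cocopy_unit)
qed

definition bend :: "'a \<Rightarrow> 'a"
  where "bend f = Comp C (TensA C f (Id C (Cod C f))) (cup (Cod C f))"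

definition unbend :: "'o \<Rightarrow> 'o \<Rightarrow> 'a \<Rightarrow> 'a"
  where "unbend X Y g = Comp C (TensA C (Id C X) (cap Y)) (TensA C g (Id C Y))"

lemma arr_bend [simp]: "Arr C f \<Longrightarrow> Arr C (bend f)"
  and dom_bend [simp]: "Arr C f \<Longrightarrow> Dom C (bend f) = TensO C (Dom C f) (Cod C f)"
  and cod_bend [simp]: "Arr C f \<Longrightarrow> Cod C (bend f) = Unit C"
  by (simp_all add: bend_def)

lemma arr_unbend [simp]:
    "\<lbrakk>Arr C g; Dom C g = TensO C X Y; Cod C g = Unit C\<rbrakk> \<Longrightarrow> Arr C (unbend X Y g)"
  and dom_unbend [simp]:
    "\<lbrakk>Arr C g; Dom C g = TensO C X Y; Cod C g = Unit C\<rbrakk> \<Longrightarrow> Dom C (unbend X Y g) = X"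
  and cod_unbend [simp]:
    "\<lbrakk>Arr C g; Dom C g = TensO C X Y; Cod C g = Unit C\<rbrakk> \<Longrightarrow> Cod C (unbend X Y g) = Y"
  by (simp_all add: unbend_def)

lemma unbend_bend:
  assumes f: "Arr C f" "Dom C f = X" "Cod C f = Y"
  shows "unbend X Y (bend f) = f"
proof -
  have tens_bend: "TensA C (bend f) (Id C Y)
      = Comp C (TensA C f (Id C (TensO C Y Y))) (TensA C (cup Y) (Id C Y))"
    using interchange'[of "TensA C f (Id C Y)" "cup Y" "Id C Y" "Id C Y"] f
    by (simp add: bend_def tensA_assoc)
  have slide: "Comp C (TensA C (Id C X) (cap Y)) (TensA C f (Id C (TensO C Y Y)))
      = Comp C f (TensA C (Id C Y) (cap Y))"
    using interchange'[of "Id C X" f "cap Y" "Id C (TensO C Y Y)"]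
      interchange'[of f "Id C Y" "Id C (Unit C)" "cap Y"] f by simp
  have "unbend X Y (bend f) = Comp C (TensA C (Id C X) (cap Y))
      (Comp C (TensA C f (Id C (TensO C Y Y))) (TensA C (cup Y) (Id C Y)))"
    unfolding unbend_def tens_bend ..
  also have "\<dots> = Comp C (Comp C f (TensA C (Id C Y) (cap Y))) (TensA C (cup Y) (Id C Y))"
    using f slide by (simp flip: comp_assoc')
  also have "\<dots> = f"
    using f by (simp add: comp_assoc' snake_left)
  finally show ?thesis .
qed

lemma bend_unbend:
  assumes g: "Arr C g" "Dom C g = TensO C X Y" "Cod C g = Unit C"
  shows "bend (unbend X Y g) = g"
proof -
  let ?snake = "Comp C (TensA C (Id C X) (TensA C (cap Y) (Id C Y)))
      (TensA C (Id C X) (TensA C (Id C Y) (cup Y)))"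
  have tens_unbend: "TensA C (unbend X Y g) (Id C Y)
      = Comp C (TensA C (Id C X) (TensA C (cap Y) (Id C Y))) (TensA C g (Id C (TensO C Y Y)))"
    using interchange'[of "TensA C (Id C X) (cap Y)" "TensA C g (Id C Y)" "Id C Y" "Id C Y"] g
    by (simp add: unbend_def tensA_assoc)
  have slide: "Comp C (TensA C g (Id C (TensO C Y Y))) (cup Y)
      = Comp C (TensA C (Id C X) (TensA C (Id C Y) (cup Y))) g"
    using interchange'[of g "Id C (Unit C)" "Id C (TensO C Y Y)" "cup Y"]
      interchange'[of "Id C (TensO C X Y)" g "cup Y" "Id C (Unit C)"]
      tens_id[of X Y] tensA_assoc[of "Id C X" "Id C Y" "cup Y"] g
    by simp
  have snake: "?snake = Id C (TensO C X Y)"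
    using interchange'[of "Id C X" "Id C X" "TensA C (cap Y) (Id C Y)" "TensA C (Id C Y) (cup Y)"]
      snake_right[of Y] by simp
  have "bend (unbend X Y g) = Comp C (Comp C (TensA C (Id C X) (TensA C (cap Y) (Id C Y)))
      (TensA C g (Id C (TensO C Y Y)))) (cup Y)"
    unfolding bend_def using g tens_unbend by simp
  also have "\<dots> = Comp C ?snake g"
    using g slide by (simp add: comp_assoc')
  also have "\<dots> = g"
    using g snake by simp
  finally show ?thesis .
qed

lemma bend_comp:
  assumes c: "Arr C c" "Cod C c = Dom C h" and h: "Arr C h"
  shows "bend (Comp C c h) = Comp C (TensA C c (Id C (Cod C h))) (bend h)"
proof -
  have "TensA C (Comp C c h) (Id C (Cod C h))
      = Comp C (TensA C c (Id C (Cod C h))) (TensA C h (Id C (Cod C h)))"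
    using interchange'[of c h "Id C (Cod C h)" "Id C (Cod C h)"] c h by simp
  then show ?thesis
    unfolding bend_def using c h by (simp add: comp_assoc')
qed

lemma bend_mono:
  assumes "Le C f f'"
  shows "Le C (bend f) (bend f')"
proof -
  have f: "Arr C f" "Arr C f'" and cod: "Cod C f' = Cod C f"
    using le_parallel[OF assms] by auto
  show ?thesis
    unfolding bend_def cod using f assms by (intro comp_right_mono tens_mono le_refl) auto
qed

lemma unbend_mono:
  "\<lbrakk>Le C g g'; Dom C g = TensO C X Y; Cod C g = Unit C\<rbrakk> \<Longrightarrow> Le C (unbend X Y g) (unbend X Y g')"
  unfolding unbend_def using le_parallel[of g g']
  by (intro comp_left_mono tens_mono le_refl) auto

lemma conv_eq_unbend:
  assumes d: "Arr C d" "Dom C d = X" "Cod C d = Y"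
  shows "conv C d = unbend Y X (Comp C (TensA C (Id C Y) d) (cup Y))"
proof -
  have "TensA C (Comp C (TensA C (Id C Y) d) (cup Y)) (Id C X)
      = Comp C (TensA C (TensA C (Id C Y) d) (Id C X)) (TensA C (cup Y) (Id C X))"
    using interchange'[of "TensA C (Id C Y) d" "cup Y" "Id C X" "Id C X"] d by simp
  then show ?thesis
    unfolding conv_def unbend_def Let_def using d by (simp add: comp_assoc')
qed

lemma arr_conv: "Arr C d \<Longrightarrow> Arr C (conv C d)"
  and dom_conv: "Arr C d \<Longrightarrow> Dom C (conv C d) = Cod C d"
  and cod_conv: "Arr C d \<Longrightarrow> Cod C (conv C d) = Dom C d"
  by (simp_all add: conv_eq_unbend)

lemma conv_hom: "d \<in> hom C X Y \<Longrightarrow> conv C d \<in> hom C Y X"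
  by (simp add: hom_def arr_conv dom_conv cod_conv)

lemma bend_conv:
  "\<lbrakk>Arr C d; Dom C d = X; Cod C d = Y\<rbrakk>
   \<Longrightarrow> bend (conv C d) = Comp C (TensA C (Id C Y) d) (cup Y)"
  by (simp add: conv_eq_unbend bend_unbend)

lemma cup_after_Id_tens_eq_Sym_bend:
  assumes c: "Arr C c" "Dom C c = X" "Cod C c = Y"
  shows "Comp C (TensA C (Id C Y) c) (cup Y) = Comp C (Sym C Y X) (bend c)"
proof -
  have "Comp C (TensA C (Id C Y) c) (Sym C Y Y) = Comp C (Sym C Y X) (TensA C c (Id C Y))"
    using sym_natural'[of "Id C Y" c] c by simp
  then have "Comp C (TensA C (Id C Y) c) (Comp C (Sym C Y Y) (cup Y))
      = Comp C (Sym C Y X) (Comp C (TensA C c (Id C Y)) (cup Y))"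
    using c by (simp flip: comp_assoc')
  moreover have "Comp C (Sym C Y Y) (cup Y) = cup Y"
    by (simp add: cocopy_comm flip: comp_assoc')
  ultimately show ?thesis
    unfolding bend_def using c by simp
qed

lemma conv_conv:
  assumes c: "Arr C c"
  shows "conv C (conv C c) = c"
proof -
  let ?X = "Dom C c" and ?Y = "Cod C c"
  have "bend (conv C c) = Comp C (Sym C ?Y ?X) (bend c)"
    using c by (simp add: bend_conv cup_after_Id_tens_eq_Sym_bend)
  then have "Comp C (Sym C ?X ?Y) (bend (conv C c)) = bend c"
    using c by (simp add: sym_inverse flip: comp_assoc')
  then have "conv C (conv C c) = unbend ?X ?Y (bend c)"
    using c by (simp add: conv_eq_unbend[of "conv C c"] arr_conv dom_conv cod_conv
        cup_after_Id_tens_eq_Sym_bend)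
  also have "\<dots> = c"
    using c by (simp add: unbend_bend)
  finally show ?thesis .
qed

lemma conv_mono:
  assumes "Le C c c'"
  shows "Le C (conv C c) (conv C c')"
proof -
  obtain X Y where c: "Arr C c" "Dom C c = X" "Cod C c = Y"
    and c': "Arr C c'" "Dom C c' = X" "Cod C c' = Y"
    using le_parallel[OF assms] by auto
  have "Le C (Comp C (TensA C (Id C Y) c) (cup Y)) (Comp C (TensA C (Id C Y) c') (cup Y))"
    using assms c c' by (intro comp_right_mono tens_mono le_refl) auto
  then have "Le C (unbend Y X (Comp C (TensA C (Id C Y) c) (cup Y)))
      (unbend Y X (Comp C (TensA C (Id C Y) c') (cup Y)))"
    using c by (intro unbend_mono) auto
  then show ?thesis
    using c c' by (simp add: conv_eq_unbend)
qed

definition cmeet :: "'a \<Rightarrow> 'a \<Rightarrow> 'a"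
  where "cmeet a b = Comp C (Copy C (Dom C a)) (Comp C (TensA C a b) (Cocopy C (Cod C a)))"

lemma cmeet_hom: "\<lbrakk>a \<in> hom C X Y; b \<in> hom C X Y\<rbrakk> \<Longrightarrow> cmeet a b \<in> hom C X Y"
  by (simp add: cmeet_def hom_def)

lemma cocopy_le_proj1: "Le C (Cocopy C Y) (TensA C (Id C Y) (Disc C Y))"
proof -
  have "Cocopy C Y = Comp C (Comp C (Cocopy C Y) (Copy C Y)) (TensA C (Id C Y) (Disc C Y))"
    by (simp add: comp_assoc' copy_unit_right)
  also have "Le C \<dots> (Comp C (Id C (TensO C Y Y)) (TensA C (Id C Y) (Disc C Y)))"
    by (rule comp_right_mono[OF copy_adj_counit]) auto
  finally show ?thesis by simp
qed

lemma cocopy_le_proj2: "Le C (Cocopy C Y) (TensA C (Disc C Y) (Id C Y))"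
proof -
  have "Cocopy C Y = Comp C (Comp C (Cocopy C Y) (Copy C Y)) (TensA C (Disc C Y) (Id C Y))"
    by (simp add: comp_assoc' copy_unit)
  also have "Le C \<dots> (Comp C (Id C (TensO C Y Y)) (TensA C (Disc C Y) (Id C Y)))"
    by (rule comp_right_mono[OF copy_adj_counit]) auto
  finally show ?thesis by simp
qed

lemma cmeet_le1:
  assumes a: "a \<in> hom C X Y" and b: "b \<in> hom C X Y"
  shows "Le C (cmeet a b) a"
proof -
  have a': "Arr C a" "Dom C a = X" "Cod C a = Y" and b': "Arr C b" "Dom C b = X" "Cod C b = Y"
    using a b by (auto simp: hom_def)
  have "Le C (cmeet a b)
      (Comp C (Copy C X) (Comp C (TensA C a b) (TensA C (Id C Y) (Disc C Y))))"
    unfolding cmeet_def a'(2,3) using a' b' by (intro comp_left_mono cocopy_le_proj1) auto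
  also have "Comp C (TensA C a b) (TensA C (Id C Y) (Disc C Y)) = TensA C a (Comp C b (Disc C Y))"
    using interchange'[of a "Id C Y" b "Disc C Y"] a' b' by simp
  also have "Le C (Comp C (Copy C X) (TensA C a (Comp C b (Disc C Y))))
      (Comp C (Copy C X) (TensA C a (Disc C X)))"
    using a' b' lax_disc[OF b] by (intro comp_left_mono tens_mono le_refl) auto
  also have "TensA C a (Disc C X) = Comp C (TensA C (Id C X) (Disc C X)) a"
    using interchange'[of "Id C X" a "Disc C X" "Id C (Unit C)"] a' by simp
  also have "Comp C (Copy C X) (Comp C (TensA C (Id C X) (Disc C X)) a) = a"
    using a' by (simp add: copy_unit_right flip: comp_assoc')
  finally show ?thesis .
qed

lemma cmeet_le2:
  assumes a: "a \<in> hom C X Y" and b: "b \<in> hom C X Y"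
  shows "Le C (cmeet a b) b"
proof -
  have a': "Arr C a" "Dom C a = X" "Cod C a = Y" and b': "Arr C b" "Dom C b = X" "Cod C b = Y"
    using a b by (auto simp: hom_def)
  have "Le C (cmeet a b)
      (Comp C (Copy C X) (Comp C (TensA C a b) (TensA C (Disc C Y) (Id C Y))))"
    unfolding cmeet_def a'(2,3) using a' b' by (intro comp_left_mono cocopy_le_proj2) auto
  also have "Comp C (TensA C a b) (TensA C (Disc C Y) (Id C Y)) = TensA C (Comp C a (Disc C Y)) b"
    using interchange'[of a "Disc C Y" b "Id C Y"] a' b' by simp
  also have "Le C (Comp C (Copy C X) (TensA C (Comp C a (Disc C Y)) b))
      (Comp C (Copy C X) (TensA C (Disc C X) b))"
    using a' b' lax_disc[OF a] by (intro comp_left_mono tens_mono le_refl) auto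
  also have "TensA C (Disc C X) b = Comp C (TensA C (Disc C X) (Id C X)) b"
    using interchange'[of "Disc C X" "Id C (Unit C)" "Id C X" b] b' by simp
  also have "Comp C (Copy C X) (Comp C (TensA C (Disc C X) (Id C X)) b) = b"
    using b' by (simp add: copy_unit flip: comp_assoc')
  finally show ?thesis .
qed

lemma cmeet_greatest:
  assumes h: "h \<in> hom C X Y" and ha: "Le C h a" and hb: "Le C h b"
  shows "Le C h (cmeet a b)"
proof -
  have h': "Arr C h" "Dom C h = X" "Cod C h = Y"
    using h by (auto simp: hom_def)
  have a: "Arr C a" "Dom C a = X" "Cod C a = Y" and b: "Arr C b" "Dom C b = X" "Cod C b = Y"
    using h' le_parallel[OF ha] le_parallel[OF hb] by auto
  have "h = Comp C h (Id C Y)"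
    using h' by simp
  also have "Le C \<dots> (Comp C h (Comp C (Copy C Y) (Cocopy C Y)))"
    using h' by (intro comp_left_mono copy_adj_unit) auto
  also have "\<dots> = Comp C (Comp C h (Copy C Y)) (Cocopy C Y)"
    using h' by (simp add: comp_assoc')
  also have "Le C \<dots> (Comp C (Comp C (Copy C X) (TensA C h h)) (Cocopy C Y))"
    using h' lax_copy[OF h] by (intro comp_right_mono) auto
  also have "Le C \<dots> (Comp C (Comp C (Copy C X) (TensA C a b)) (Cocopy C Y))"
    using h' a b ha hb by (intro comp_right_mono comp_left_mono tens_mono) auto
  also have "\<dots> = cmeet a b"
    unfolding cmeet_def using a b by (simp add: comp_assoc')
  finally show ?thesis .
qed

lemma cmeet_Id_eq_Copy_bend:
  assumes f: "Arr C f" "Dom C f = X" "Cod C f = X"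
  shows "cmeet f (Id C X) = Comp C (Copy C X) (TensA C (Comp C (Copy C X) (bend f)) (Id C X))"
proof -
  let ?lower = "Comp C (TensA C (Cocopy C X) (Id C X)) (TensA C (Disc C X) (Id C X))"
  have tens: "TensA C (Comp C (Copy C X) (bend f)) (Id C X)
      = Comp C (TensA C (Copy C X) (Id C X)) (Comp C (TensA C f (Id C (TensO C X X))) ?lower)"
  proof -
    have "TensA C (Comp C (Copy C X) (bend f)) (Id C X)
        = Comp C (TensA C (Copy C X) (Id C X)) (TensA C (bend f) (Id C X))"
      using interchange'[of "Copy C X" "bend f" "Id C X" "Id C X"] f by simp
    moreover have "TensA C (bend f) (Id C X)
        = Comp C (TensA C (TensA C f (Id C X)) (Id C X)) (TensA C (cup X) (Id C X))"
      using interchange'[of "TensA C f (Id C X)" "cup X" "Id C X" "Id C X"] f by (simp add: bend_def)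
    moreover have "TensA C (cup X) (Id C X) = ?lower"
      using interchange'[of "Cocopy C X" "Disc C X" "Id C X" "Id C X"] by simp
    ultimately show ?thesis
      using f by (simp add: tensA_assoc)
  qed
  have slide: "Comp C (TensA C (Id C X) (Copy C X)) (TensA C f (Id C (TensO C X X)))
      = Comp C (TensA C f (Id C X)) (TensA C (Id C X) (Copy C X))"
    using interchange'[of "Id C X" f "Copy C X" "Id C (TensO C X X)"]
      interchange'[of f "Id C X" "Id C X" "Copy C X"] f by simp
  have "Comp C (Copy C X) (TensA C (Comp C (Copy C X) (bend f)) (Id C X))
      = Comp C (Comp C (Copy C X) (TensA C (Copy C X) (Id C X)))
          (Comp C (TensA C f (Id C (TensO C X X))) ?lower)"
    unfolding tens using f by (simp add: comp_assoc')
  also have "\<dots> = Comp C (Copy C X) (Comp C (Comp C (TensA C (Id C X) (Copy C X))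
      (TensA C f (Id C (TensO C X X)))) ?lower)"
    unfolding copy_assoc using f by (simp add: comp_assoc')
  also have "\<dots> = Comp C (Copy C X) (Comp C (TensA C f (Id C X))
      (Comp C (Comp C (TensA C (Id C X) (Copy C X)) (TensA C (Cocopy C X) (Id C X)))
        (TensA C (Disc C X) (Id C X))))"
    unfolding slide using f by (simp add: comp_assoc')
  also have "\<dots> = cmeet f (Id C X)"
    unfolding frobenius2 cmeet_def using f by (simp add: comp_assoc' copy_unit)
  finally show ?thesis by simp
qed

lemma Copy_comp_bend_comp_conv:
  assumes c: "c \<in> hom C X Y" and d: "d \<in> hom C X Y"
  shows "Comp C (Copy C X) (bend (Comp C c (conv C d))) = Comp C (cmeet c d) (Disc C Y)"
proof -
  have c': "Arr C c" "Dom C c = X" "Cod C c = Y" and d': "Arr C d" "Dom C d = X" "Cod C d = Y"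
    using c d by (auto simp: hom_def)
  have "bend (Comp C c (conv C d))
      = Comp C (TensA C c (Id C X)) (Comp C (TensA C (Id C Y) d) (cup Y))"
    using c' d' by (simp add: bend_comp bend_conv arr_conv dom_conv cod_conv)
  also have "\<dots> = Comp C (Comp C (TensA C c (Id C X)) (TensA C (Id C Y) d)) (cup Y)"
    using c' d' by (simp add: comp_assoc')
  also have "Comp C (TensA C c (Id C X)) (TensA C (Id C Y) d) = TensA C c d"
    using interchange'[of c "Id C Y" "Id C X" d] c' d' by simp
  finally show ?thesis
    unfolding cmeet_def using c' d' by (simp add: comp_assoc')
qed

lemma is_map_Copy: "is_map C (Copy C X)"
proof -
  let ?assoc = "Comp C (Copy C X) (TensA C (Copy C X) (Id C X))"
  have copy_copy: "Comp C (Copy C X) (TensA C (Copy C X) (Copy C X))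
      = Comp C (Copy C X) (TensA C (Id C X) ?assoc)"
  proof -
    have "TensA C (Copy C X) (Copy C X)
        = Comp C (TensA C (Copy C X) (Id C X)) (TensA C (Id C X) (TensA C (Id C X) (Copy C X)))"
      using interchange'[of "Copy C X" "Id C (TensO C X X)" "Id C X" "Copy C X"]
        tensA_assoc[of "Id C X" "Id C X" "Copy C X"] by simp
    then have "Comp C (Copy C X) (TensA C (Copy C X) (Copy C X))
        = Comp C ?assoc (TensA C (Id C X) (TensA C (Id C X) (Copy C X)))"
      by (simp add: comp_assoc')
    also have "\<dots> = Comp C (Copy C X) (Comp C (TensA C (Id C X) (Copy C X))
        (TensA C (Id C X) (TensA C (Id C X) (Copy C X))))"
      by (simp add: copy_assoc comp_assoc')
    also have "Comp C (TensA C (Id C X) (Copy C X)) (TensA C (Id C X) (TensA C (Id C X) (Copy C X)))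
        = TensA C (Id C X) ?assoc"
      using interchange'[of "Id C X" "Id C X" "Copy C X" "TensA C (Id C X) (Copy C X)"]
        copy_assoc[of X] by simp
    finally show ?thesis .
  qed
  have assoc_sym: "Comp C ?assoc (TensA C (Sym C X X) (Id C X)) = ?assoc"
  proof -
    have "Comp C (TensA C (Copy C X) (Id C X)) (TensA C (Sym C X X) (Id C X))
        = TensA C (Copy C X) (Id C X)"
      using interchange'[of "Copy C X" "Sym C X X" "Id C X" "Id C X"] copy_comm[of X] by simp
    then show ?thesis by (simp add: comp_assoc')
  qed
  have "Comp C (Copy C X) (Copy C (TensO C X X))
      = Comp C (Copy C X) (TensA C (Copy C X) (Copy C X))"
  proof -
    have "Comp C (Copy C X) (Copy C (TensO C X X))
        = Comp C (Comp C (Copy C X) (TensA C (Copy C X) (Copy C X)))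
            (TensA C (Id C X) (TensA C (Sym C X X) (Id C X)))"
      by (simp add: copy_tens comp_assoc' tensA_assoc)
    also have "\<dots> = Comp C (Copy C X) (Comp C (TensA C (Id C X) ?assoc)
        (TensA C (Id C X) (TensA C (Sym C X X) (Id C X))))"
      unfolding copy_copy by (simp add: comp_assoc')
    also have "Comp C (TensA C (Id C X) ?assoc) (TensA C (Id C X) (TensA C (Sym C X X) (Id C X)))
        = TensA C (Id C X) ?assoc"
      using interchange'[of "Id C X" "Id C X" ?assoc "TensA C (Sym C X X) (Id C X)"] assoc_sym
      by simp
    finally show ?thesis
      using copy_copy by simp
  qed
  moreover have "Comp C (Copy C X) (Disc C (TensO C X X)) = Disc C X"
  proof -
    have "TensA C (Disc C X) (Disc C X) = Comp C (TensA C (Disc C X) (Id C X)) (Disc C X)"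
      using interchange'[of "Disc C X" "Id C (Unit C)" "Id C X" "Disc C X"] by simp
    then show ?thesis
      by (simp add: disc_tens copy_unit flip: comp_assoc')
  qed
  ultimately show ?thesis
    unfolding is_map_def by simp
qed

end

context peircean_bicategory
begin

lemma le_refl_hom: "f \<in> hom C X Y \<Longrightarrow> Le C f f"
  by (simp add: hom_def le_refl)

lemma Meet_le1: "\<lbrakk>a \<in> hom C X Y; b \<in> hom C X Y\<rbrakk> \<Longrightarrow> Le C (Meet C a b) a"
  using meet_glb[of a X Y b "Meet C a b"] meet_hom[of a X Y b] le_refl_hom by blast

lemma Meet_le2: "\<lbrakk>a \<in> hom C X Y; b \<in> hom C X Y\<rbrakk> \<Longrightarrow> Le C (Meet C a b) b"
  using meet_glb[of a X Y b "Meet C a b"] meet_hom[of a X Y b] le_refl_hom by blast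

lemma le_Bot_if_le_Neg:
  "\<lbrakk>a \<in> hom C X Y; k \<in> hom C X Y; Le C k a; Le C k (Neg C a)\<rbrakk> \<Longrightarrow> Le C k (Bot C X Y)"
  using meet_glb[of a X Y "Neg C a" k] neg_meet[of a X Y] neg_hom[of a X Y] by simp

lemma le_Bot_imp_eq: "Le C f (Bot C X Y) \<Longrightarrow> f = Bot C X Y"
  using le_parallel[of f "Bot C X Y"] bot_hom[of X Y] bot_least[of f X Y] le_antisym
  by (auto simp: hom_def)

lemma le_by_Neg_cases:
  assumes h: "h \<in> hom C X Y" and a: "a \<in> hom C X Y" and g: "g \<in> hom C X Y"
    and "Le C (Meet C h a) g" and "Le C (Meet C h (Neg C a)) g"
  shows "Le C h g"
proof -
  have na: "Neg C a \<in> hom C X Y"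
    using neg_hom[OF a] .
  have "Le C h (Meet C h (Top C X Y))"
    using meet_glb[OF h top_hom h] le_refl_hom[OF h] top_greatest[OF h] by blast
  also have "Meet C h (Top C X Y) = Join C (Meet C h a) (Meet C h (Neg C a))"
    using neg_join[OF a] distrib[OF h a na] by simp
  also have "Le C \<dots> g"
    using join_lub[OF meet_hom[OF h a] meet_hom[OF h na] g] assms(4,5) by blast
  finally show ?thesis .
qed

lemma le_Neg_iff:
  assumes a: "a \<in> hom C X Y" and h: "h \<in> hom C X Y"
  shows "Le C h (Neg C a) \<longleftrightarrow> (\<forall>k\<in>hom C X Y. Le C k h \<longrightarrow> Le C k a \<longrightarrow> Le C k (Bot C X Y))"
proof
  assume "Le C h (Neg C a)"
  then show "\<forall>k\<in>hom C X Y. Le C k h \<longrightarrow> Le C k a \<longrightarrow> Le C k (Bot C X Y)"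
    using le_Bot_if_le_Neg[OF a] le_trans by blast
next
  assume disjoint: "\<forall>k\<in>hom C X Y. Le C k h \<longrightarrow> Le C k a \<longrightarrow> Le C k (Bot C X Y)"
  have na: "Neg C a \<in> hom C X Y"
    using neg_hom[OF a] .
  have "Le C (Meet C h a) (Bot C X Y)"
    using disjoint meet_hom[OF h a] Meet_le1[OF h a] Meet_le2[OF h a] by blast
  then have "Le C (Meet C h a) (Neg C a)"
    using bot_least[OF na] le_trans by blast
  then show "Le C h (Neg C a)"
    using le_by_Neg_cases[OF h a na] Meet_le2[OF h na] by blast
qed

lemma le_Neg_commute: "\<lbrakk>a \<in> hom C X Y; b \<in> hom C X Y\<rbrakk> \<Longrightarrow> Le C a (Neg C b) \<longleftrightarrow> Le C b (Neg C a)"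
  using le_Neg_iff by blast

lemma Neg_Neg:
  assumes a: "a \<in> hom C X Y"
  shows "Neg C (Neg C a) = a"
proof (rule le_antisym)
  have na: "Neg C a \<in> hom C X Y" and nna: "Neg C (Neg C a) \<in> hom C X Y"
    using neg_hom a by blast+
  show "Le C a (Neg C (Neg C a))"
    using le_Neg_commute[OF a na] le_refl_hom[OF na] by blast
  have "Le C (Meet C (Neg C (Neg C a)) (Neg C a)) (Bot C X Y)"
    using le_Bot_if_le_Neg[OF na] meet_hom[OF nna na] Meet_le1[OF nna na] Meet_le2[OF nna na]
    by blast
  then have "Le C (Meet C (Neg C (Neg C a)) (Neg C a)) a"
    using bot_least[OF a] le_trans by blast
  then show "Le C (Neg C (Neg C a)) a"
    using le_by_Neg_cases[OF nna a a] Meet_le2[OF nna a] by blast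
qed

lemma Neg_Bot: "Neg C (Bot C X Y) = Top C X Y"
proof (rule le_antisym)
  show "Le C (Neg C (Bot C X Y)) (Top C X Y)"
    using top_greatest neg_hom bot_hom by blast
  show "Le C (Top C X Y) (Neg C (Bot C X Y))"
    using le_Neg_iff[OF bot_hom top_hom] by blast
qed

text \<open>By le_Neg_iff, negation is determined by the order alone, so it is preserved
  by order isomorphisms between homsets.\<close>

lemma order_iso_Neg:
  assumes \<phi>: "\<And>f. f \<in> hom C A B \<Longrightarrow> \<phi> f \<in> hom C A' B'"
    and \<psi>: "\<And>g. g \<in> hom C A' B' \<Longrightarrow> \<psi> g \<in> hom C A B"
    and \<psi>_\<phi>: "\<And>f. f \<in> hom C A B \<Longrightarrow> \<psi> (\<phi> f) = f"
    and \<phi>_\<psi>: "\<And>g. g \<in> hom C A' B' \<Longrightarrow> \<phi> (\<psi> g) = g"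
    and \<phi>_mono: "\<And>f f'. \<lbrakk>f \<in> hom C A B; f' \<in> hom C A B; Le C f f'\<rbrakk> \<Longrightarrow> Le C (\<phi> f) (\<phi> f')"
    and \<psi>_mono: "\<And>g g'. \<lbrakk>g \<in> hom C A' B'; g' \<in> hom C A' B'; Le C g g'\<rbrakk> \<Longrightarrow> Le C (\<psi> g) (\<psi> g')"
    and f: "f \<in> hom C A B"
  shows "\<phi> (Neg C f) = Neg C (\<phi> f)"
proof (rule le_antisym)
  have nf: "Neg C f \<in> hom C A B"
    using neg_hom[OF f] .
  have \<phi>f: "\<phi> f \<in> hom C A' B'" and \<phi>nf: "\<phi> (Neg C f) \<in> hom C A' B'"
    using \<phi> f nf by blast+
  have n\<phi>f: "Neg C (\<phi> f) \<in> hom C A' B'"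
    using neg_hom[OF \<phi>f] .
  show "Le C (\<phi> (Neg C f)) (Neg C (\<phi> f))"
    unfolding le_Neg_iff[OF \<phi>f \<phi>nf]
  proof (intro ballI impI)
    fix k assume k: "k \<in> hom C A' B'" and "Le C k (\<phi> (Neg C f))" and "Le C k (\<phi> f)"
    then have "Le C (\<psi> k) (Neg C f)" and "Le C (\<psi> k) f"
      using \<psi>_mono[OF k] \<psi>_\<phi> \<phi> f nf by metis+
    then have "Le C (\<psi> k) (\<psi> (Bot C A' B'))"
      using le_Bot_if_le_Neg[OF f \<psi>[OF k]] bot_least[OF \<psi>[OF bot_hom]] le_trans by blast
    then show "Le C k (Bot C A' B')"
      using \<phi>_mono \<psi> k bot_hom \<phi>_\<psi> by metis
  qed
  have \<psi>n\<phi>f: "\<psi> (Neg C (\<phi> f)) \<in> hom C A B"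
    using \<psi>[OF n\<phi>f] .
  have "Le C (\<psi> (Neg C (\<phi> f))) (Neg C f)"
    unfolding le_Neg_iff[OF f \<psi>n\<phi>f]
  proof (intro ballI impI)
    fix k assume k: "k \<in> hom C A B" and "Le C k (\<psi> (Neg C (\<phi> f)))" and "Le C k f"
    then have "Le C (\<phi> k) (Neg C (\<phi> f))" and "Le C (\<phi> k) (\<phi> f)"
      using \<phi>_mono[OF k] \<phi>_\<psi>[OF n\<phi>f] \<psi>n\<phi>f f by metis+
    then have "Le C (\<phi> k) (\<phi> (Bot C A B))"
      using le_Bot_if_le_Neg[OF \<phi>f \<phi>[OF k]] bot_least[OF \<phi>[OF bot_hom]] le_trans by blast
    then show "Le C k (Bot C A B)"
      using \<psi>_mono \<phi> k bot_hom \<psi>_\<phi> by metis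
  qed
  then have "Le C (\<phi> (\<psi> (Neg C (\<phi> f)))) (\<phi> (Neg C f))"
    using \<phi>_mono \<psi>n\<phi>f nf by blast
  then show "Le C (Neg C (\<phi> f)) (\<phi> (Neg C f))"
    using \<phi>_\<psi>[OF n\<phi>f] by simp
qed

lemma Meet_eq_cmeet:
  assumes a: "a \<in> hom C X Y" and b: "b \<in> hom C X Y"
  shows "Meet C a b = cmeet a b"
proof (rule le_antisym)
  show "Le C (Meet C a b) (cmeet a b)"
    using cmeet_greatest[OF meet_hom[OF a b]] Meet_le1[OF a b] Meet_le2[OF a b] .
  show "Le C (cmeet a b) (Meet C a b)"
    using meet_glb[OF a b cmeet_hom[OF a b]] cmeet_le1[OF a b] cmeet_le2[OF a b] by blast
qed

lemma bend_Neg: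
  assumes f: "f \<in> hom C X Y"
  shows "bend (Neg C f) = Neg C (bend f)"
proof (rule order_iso_Neg[where \<psi> = "unbend X Y"])
  show "\<And>f. f \<in> hom C X Y \<Longrightarrow> bend f \<in> hom C (TensO C X Y) (Unit C)"
    and "\<And>g. g \<in> hom C (TensO C X Y) (Unit C) \<Longrightarrow> unbend X Y g \<in> hom C X Y"
    and "\<And>f. f \<in> hom C X Y \<Longrightarrow> unbend X Y (bend f) = f"
    and "\<And>g. g \<in> hom C (TensO C X Y) (Unit C) \<Longrightarrow> bend (unbend X Y g) = g"
    by (auto simp: hom_def unbend_bend bend_unbend)
  show "\<And>g g'. \<lbrakk>g \<in> hom C (TensO C X Y) (Unit C); g' \<in> hom C (TensO C X Y) (Unit C); Le C g g'\<rbrakk>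
      \<Longrightarrow> Le C (unbend X Y g) (unbend X Y g')"
    by (rule unbend_mono) (auto simp: hom_def)
qed (use f bend_mono in auto)

lemma conv_Neg:
  assumes f: "f \<in> hom C X Y"
  shows "conv C (Neg C f) = Neg C (conv C f)"
proof (rule order_iso_Neg[where \<psi> = "conv C"])
  show "\<And>f. f \<in> hom C X Y \<Longrightarrow> conv C (conv C f) = f"
    and "\<And>g. g \<in> hom C Y X \<Longrightarrow> conv C (conv C g) = g"
    by (auto simp: hom_def conv_conv)
qed (use f conv_hom conv_mono in auto)

lemma Neg_conv_Neg: "c \<in> hom C X Y \<Longrightarrow> Neg C (conv C (Neg C c)) = conv C c"
  using conv_Neg[OF neg_hom] Neg_Neg by simp

lemma Top_Unit_eq_Disc: "Top C X (Unit C) = Disc C X"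
proof (rule le_antisym)
  show "Le C (Disc C X) (Top C X (Unit C))"
    using top_greatest[OF disc_hom] .
  have top: "Top C X (Unit C) \<in> hom C X (Unit C)"
    by (rule top_hom)
  then have "Top C X (Unit C) = Comp C (Top C X (Unit C)) (Disc C (Unit C))"
    by (simp add: disc_unit_obj hom_def)
  also have "Le C \<dots> (Disc C X)"
    using lax_disc[OF top] .
  finally show "Le C (Top C X (Unit C)) (Disc C X)" .
qed

lemma Bot_comp_Disc_le: "Le C (Comp C (Bot C X Y) (Disc C Y)) (Bot C X (Unit C))"
proof -
  have bot: "Arr C (Bot C X Y)" "Dom C (Bot C X Y) = X" "Cod C (Bot C X Y) = Y"
    and bot': "Arr C (Bot C X (Unit C))" "Dom C (Bot C X (Unit C)) = X" "Cod C (Bot C X (Unit C)) = Unit C"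
    using bot_hom[of X Y] bot_hom[of X "Unit C"] by (auto simp: hom_def)
  have "Le C (Bot C X Y) (Comp C (Bot C X (Unit C)) (Codisc C Y))"
    using bot' by (intro bot_least) (simp add: hom_def)
  then have "Le C (Comp C (Bot C X Y) (Disc C Y))
      (Comp C (Comp C (Bot C X (Unit C)) (Codisc C Y)) (Disc C Y))"
    using bot by (intro comp_right_mono) auto
  also have "\<dots> = Comp C (Bot C X (Unit C)) (Comp C (Codisc C Y) (Disc C Y))"
    using bot' by (simp add: comp_assoc')
  also have "Le C \<dots> (Comp C (Bot C X (Unit C)) (Id C (Unit C)))"
    using bot' by (intro comp_left_mono disc_adj_counit) auto
  also have "\<dots> = Bot C X (Unit C)"
    using bot' by simp
  finally show ?thesis .
qed

lemma le_Neg_Id_if_Copy_comp_bend_eq_Bot: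
  assumes e: "e \<in> hom C X X" and empty: "Comp C (Copy C X) (bend e) = Bot C X (Unit C)"
  shows "Le C e (Neg C (Id C X))"
proof -
  have ne: "Neg C e \<in> hom C X X"
    using neg_hom[OF e] .
  have "Comp C (Copy C X) (bend (Neg C e)) = Comp C (Copy C X) (Neg C (bend e))"
    using bend_Neg[OF e] by simp
  also have "\<dots> = Neg C (Comp C (Copy C X) (bend e))"
    using e by (intro map_neg[OF is_map_Copy copy_hom]) (auto simp: hom_def)
  also have "\<dots> = Disc C X"
    unfolding empty Neg_Bot Top_Unit_eq_Disc ..
  finally have "Comp C (Copy C X) (bend (Neg C e)) = Disc C X" .
  then have "Meet C (Neg C e) (Id C X) = Id C X"
    using Meet_eq_cmeet[OF ne id_hom] cmeet_Id_eq_Copy_bend[of "Neg C e" X] ne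
    by (simp add: hom_def copy_unit)
  then have "Le C (Id C X) (Neg C e)"
    using Meet_le1[OF ne id_hom] by simp
  then show ?thesis
    using le_Neg_commute[OF e id_hom] by simp
qed

lemma comp_conv_Neg_le_Neg_Id:
  assumes c: "c \<in> hom C X Y"
  shows "Le C (Comp C c (conv C (Neg C c))) (Neg C (Id C X))"
proof (rule le_Neg_Id_if_Copy_comp_bend_eq_Bot)
  have nc: "Neg C c \<in> hom C X Y"
    using neg_hom[OF c] .
  show "Comp C c (conv C (Neg C c)) \<in> hom C X X"
    using comp_hom[OF c conv_hom[OF nc]] .
  have "Comp C (Copy C X) (bend (Comp C c (conv C (Neg C c)))) = Comp C (Bot C X Y) (Disc C Y)"
    using Copy_comp_bend_comp_conv[OF c nc] Meet_eq_cmeet[OF c nc] neg_meet[OF c] by simp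
  then show "Comp C (Copy C X) (bend (Comp C c (conv C (Neg C c)))) = Bot C X (Unit C)"
    using Bot_comp_Disc_le le_Bot_imp_eq by metis
qed

lemma conv_Neg_comp_le_Neg_Id:
  assumes c: "c \<in> hom C X Y"
  shows "Le C (Comp C (conv C (Neg C c)) c) (Neg C (Id C Y))"
proof -
  have "conv C (Neg C (conv C (Neg C c))) = c"
    using Neg_conv_Neg[OF c] c by (simp add: conv_conv hom_def)
  then show ?thesis
    using comp_conv_Neg_le_Neg_Id[OF conv_hom[OF neg_hom[OF c]]] by simp
qed

end

theorem lemma67:
  fixes C :: "('o, 'a, 'm) pbicat_scheme"
  assumes "peircean_bicategory C"
    and "c \<in> hom C X Y"
  shows "Le C (Comp C c (conv C (Neg C c))) (bid C X)
       \<and> Le C (Id C Y) (bcomp C (conv C (Neg C c)) c)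
       \<and> Le C (Comp C (conv C (Neg C c)) c) (bid C Y)
       \<and> Le C (Id C X) (bcomp C c (conv C (Neg C c)))"
proof -
  interpret peircean_bicategory C by fact
  have c: "c \<in> hom C X Y" and nc: "Neg C c \<in> hom C X Y"
    using assms(2) neg_hom by blast+
  have "Le C (Comp C (Neg C c) (conv C c)) (Neg C (Id C X))"
    using comp_conv_Neg_le_Neg_Id[OF nc] Neg_Neg[OF c] by simp
  then have 4: "Le C (Id C X) (bcomp C c (conv C (Neg C c)))"
    unfolding bcomp_def Neg_conv_Neg[OF c]
    using le_Neg_commute[OF comp_hom[OF nc conv_hom[OF c]] id_hom] by simp
  have "Le C (Comp C (conv C c) (Neg C c)) (Neg C (Id C Y))"
    using conv_Neg_comp_le_Neg_Id[OF nc] Neg_Neg[OF c] by simp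
  then have 2: "Le C (Id C Y) (bcomp C (conv C (Neg C c)) c)"
    unfolding bcomp_def Neg_conv_Neg[OF c]
    using le_Neg_commute[OF comp_hom[OF conv_hom[OF c] nc] id_hom] by simp
  show ?thesis
    using comp_conv_Neg_le_Neg_Id[OF c] conv_Neg_comp_le_Neg_Id[OF c] 2 4
    by (simp add: bid_def)
qed

end
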